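(* Assume the input embeddings $e_1,\dots,e_N$ are orthonormal and the output embeddings $u_1,\dots,u_M$ are orthonormal. Let $W_t$ solve the gradient flow $\dot W_t=-\nabla\mathcal{L}(W_t)$ from an arbitrary $W_0$, and write $w_i(t)=u_i^\top W_t e_x$ for a fixed $x\in[N]$. Then for all $i,j\in[M]\setminus\{f^*(x)\}$ the quantity $\exp(-w_i(t))-\exp(-w_j(t))$ is constant in $t$, and $\sum_{i\in[M]}w_i(t)$ is constant in $t$.
   Context: Integers $N,M\ge2$, $d\ge\max(N,M)$. Fixed embeddings $e_1,\dots,e_N,u_1,\dots,u_M\in\mathbb{R}^d$, target $f^*:[N]\to[M]$, probability distribution $p$ on $[N]$. For $W\in\mathbb{R}^{d\times d}$: $p_W(y\mid x)=\exp(u_y^\top We_x)/\sum_{z\in[M]}\exp(u_z^\top We_x)$, $\mathcal{L}(W)=-\sum_x p(x)\log p_W(f^*(x)\mid x)$. Gradients are for the Frobenius inner product. *)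

theory Defs
  imports "HOL-Analysis.Analysis"
begin

text \<open>Indices: [N] is rendered as {0..<N}, [M] as {0..<M}. Embeddings live in real^'d,
  W is a d x d matrix real^'d^'d; the inner product on real^'d^'d is the Frobenius inner product.\<close>

definition logit :: "(nat \<Rightarrow> real^'d) \<Rightarrow> (nat \<Rightarrow> real^'d) \<Rightarrow> real^'d^'d \<Rightarrow> nat \<Rightarrow> nat \<Rightarrow> real" where
  "logit e u W y x = u y \<bullet> (W *v e x)"

definition pW :: "nat \<Rightarrow> (nat \<Rightarrow> real^'d) \<Rightarrow> (nat \<Rightarrow> real^'d) \<Rightarrow> real^'d^'d \<Rightarrow> nat \<Rightarrow> nat \<Rightarrow> real" where
  "pW M e u W y x = exp (logit e u W y x) / (\<Sum>z<M. exp (logit e u W z x))"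

definition loss :: "nat \<Rightarrow> nat \<Rightarrow> (nat \<Rightarrow> real^'d) \<Rightarrow> (nat \<Rightarrow> real^'d) \<Rightarrow> (nat \<Rightarrow> nat)
    \<Rightarrow> (nat \<Rightarrow> real) \<Rightarrow> real^'d^'d \<Rightarrow> real" where
  "loss N M e u fstar p W = - (\<Sum>x<N. p x * ln (pW M e u W (fstar x) x))"

end

theory Submission imports Defs begin

text \<open>With orthonormal embeddings, the gradient flow moves the logit w_i = u_i \<bullet> W e_x at rate
  p(x) (\<delta>_{i,f*(x)} - softmax_i(w)). Summed over i these rates cancel, so \<Sum>_i w_i is constant;
  and for i \<noteq> f*(x) one has (exp(-w_i))' = p(x) / \<Sum>_z exp(w_z), the same for every such i,
  so differences of exp(-w_i) are constant.\<close>

lemma has_derivative_logit: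
  fixes e u :: "nat \<Rightarrow> real^'d"
  shows "((\<lambda>W. logit e u W y x) has_derivative (\<lambda>h. u y \<bullet> (h *v e x))) F"
proof -
  have "bounded_linear (\<lambda>h::real^'d^'d. u y \<bullet> (h *v e x))"
    by (intro bounded_linear_compose[OF bounded_linear_inner_right] bounded_linearI')
       (auto simp: matrix_vector_mult_def vec_eq_iff algebra_simps sum.distrib sum_distrib_left)
  then show ?thesis
    unfolding logit_def by (rule bounded_linear.has_derivative) (rule has_derivative_ident)
qed

lemma sum_exp_logit_pos: "M > 0 \<Longrightarrow> (\<Sum>z<M. exp (logit e u W z x)) > 0"
  by (intro sum_pos) auto

lemma loss_eq_log_sum_exp:
  assumes "M > 0"
  shows "loss N M e u fstar p = (\<lambda>W. - (\<Sum>x<N. p x *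
           (logit e u W (fstar x) x - ln (\<Sum>z<M. exp (logit e u W z x)))))"
proof -
  have "(\<Sum>z<M. exp (logit e u W z x)) \<noteq> 0" for W x
    using sum_exp_logit_pos[OF assms] by (metis less_irrefl)
  then show ?thesis by (simp add: fun_eq_iff loss_def pW_def ln_div)
qed

lemma has_derivative_loss:
  assumes "M > 0"
  shows "(loss N M e u fstar p has_derivative (\<lambda>h. - (\<Sum>x<N. p x * (u (fstar x) \<bullet> (h *v e x)
           - (\<Sum>z<M. pW M e u W z x * (u z \<bullet> (h *v e x))))))) (at W)"
proof -
  have log_sum_exp: "((\<lambda>W. ln (\<Sum>z<M. exp (logit e u W z x))) has_derivative
          (\<lambda>h. \<Sum>z<M. pW M e u W z x * (u z \<bullet> (h *v e x)))) (at W)" for x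
    apply (rule has_derivative_eq_rhs)
     apply (rule has_derivative_ln)
      apply (rule sum_exp_logit_pos[OF assms])
     apply (rule has_derivative_sum, rule has_derivative_exp, rule has_derivative_logit)
    apply (simp add: pW_def sum_distrib_left divide_inverse mult_ac)
    done
  show ?thesis unfolding loss_eq_log_sum_exp[OF assms]
    by (intro has_derivative_minus has_derivative_sum has_derivative_mult_right has_derivative_diff
        has_derivative_logit log_sum_exp)
qed

text \<open>The component is read off by pairing the gradient with the rank-one matrix u_i e_x^T,
  which orthonormality turns into a single term of the directional derivative.\<close>

lemma loss_gradient_component:
  fixes e u :: "nat \<Rightarrow> real^'d" and G W :: "real^'d^'d"
  assumes grad: "GDERIV (loss N M e u fstar p) W :> G"
    and e_orth: "\<forall>a<N. \<forall>b<N. e a \<bullet> e b = (if a = b then 1 else 0)"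
    and u_orth: "\<forall>a<M. \<forall>b<M. u a \<bullet> u b = (if a = b then 1 else 0)"
    and fstar: "\<forall>y<N. fstar y < M" and x: "x < N" and i: "i < M"
  shows "u i \<bullet> (G *v e x) = p x * (pW M e u W i x - (if i = fstar x then 1 else 0))"
proof -
  have M: "M > 0" using i by simp
  define h :: "real^'d^'d" where "h = (\<chi> a b. u i $ a * e x $ b)"
  have h_inner: "h \<bullet> G = u i \<bullet> (G *v e x)"
    by (simp add: h_def inner_vec_def matrix_vector_mult_def sum_distrib_left algebra_simps)
  have h_apply: "h *v v = (e x \<bullet> v) *\<^sub>R u i" for v
    by (simp add: h_def vec_eq_iff inner_vec_def matrix_vector_mult_def sum_distrib_left algebra_simps)
  have softmax_i: "(\<Sum>z<M. pW M e u W z x * (u z \<bullet> u i)) = pW M e u W i x"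
  proof -
    have "(\<Sum>z<M. pW M e u W z x * (u z \<bullet> u i)) = (\<Sum>z<M. if z = i then pW M e u W z x else 0)"
      using u_orth i by (intro sum.cong) auto
    then show ?thesis using i by (simp add: sum.delta)
  qed
  have summand: "p y * (u (fstar y) \<bullet> (h *v e y) - (\<Sum>z<M. pW M e u W z y * (u z \<bullet> (h *v e y))))
     = (if y = x then p x * ((if i = fstar x then 1 else 0) - pW M e u W i x) else 0)"
    if "y < N" for y
    using that x i fstar e_orth u_orth softmax_i by (auto simp: h_apply inner_commute)
  have "h \<bullet> G = - (\<Sum>y<N. p y * (u (fstar y) \<bullet> (h *v e y)
                   - (\<Sum>z<M. pW M e u W z y * (u z \<bullet> (h *v e y)))))"
    using has_derivative_unique[OF grad[unfolded gderiv_def] has_derivative_loss[OF M]]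
    by (metis (no_types, lifting))
  also have "\<dots> = - (\<Sum>y<N. if y = x then p x * ((if i = fstar x then 1 else 0) - pW M e u W i x) else 0)"
    using summand by (intro arg_cong[where f = uminus] sum.cong) auto
  also have "\<dots> = p x * (pW M e u W i x - (if i = fstar x then 1 else 0))"
    using x by (simp add: right_diff_distrib)
  finally show ?thesis using h_inner by simp
qed

lemma logit_has_derivative_along_gradient_flow:
  fixes W :: "real \<Rightarrow> real^'d^'d" and G :: "real^'d^'d"
  assumes grad: "GDERIV (loss N M e u fstar p) (W t) :> G"
    and flow: "(W has_vector_derivative - G) (at t within S)"
    and e_orth: "\<forall>a<N. \<forall>b<N. e a \<bullet> e b = (if a = b then 1 else 0)"
    and u_orth: "\<forall>a<M. \<forall>b<M. u a \<bullet> u b = (if a = b then 1 else 0)"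
    and fstar: "\<forall>y<N. fstar y < M" and x: "x < N" and i: "i < M"
  shows "((\<lambda>t. logit e u (W t) i x) has_real_derivative
           p x * ((if i = fstar x then 1 else 0) - pW M e u (W t) i x)) (at t within S)"
proof -
  have "((\<lambda>t. logit e u (W t) i x) has_derivative (\<lambda>h. u i \<bullet> ((h *\<^sub>R - G) *v e x))) (at t within S)"
    using has_derivative_in_compose[OF flow[unfolded has_vector_derivative_def] has_derivative_logit]
    by (simp add: o_def)
  moreover have "(\<lambda>h. u i \<bullet> ((h *\<^sub>R - G) *v e x))
      = (*) (p x * ((if i = fstar x then 1 else 0) - pW M e u (W t) i x))"
  proof
    fix h :: real
    have "(h *\<^sub>R - G) *v e x = (- h) *\<^sub>R (G *v e x)"
      by (metis scaleR_matrix_vector_assoc scaleR_minus_left scaleR_minus_right)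
    then have "u i \<bullet> ((h *\<^sub>R - G) *v e x) = - h * (u i \<bullet> (G *v e x))"
      by simp
    also have "\<dots> = p x * ((if i = fstar x then 1 else 0) - pW M e u (W t) i x) * h"
      unfolding loss_gradient_component[OF grad e_orth u_orth fstar x i] by argo
    finally show "u i \<bullet> ((h *\<^sub>R - G) *v e x)
      = p x * ((if i = fstar x then 1 else 0) - pW M e u (W t) i x) * h" .
  qed
  ultimately show ?thesis
    unfolding has_field_derivative_def by simp
qed

locale softmax_logit_flow =
  fixes w :: "nat \<Rightarrow> real \<Rightarrow> real" and M k :: nat and c :: real
  assumes has_derivative_w: "\<And>i t. i < M \<Longrightarrow> t \<ge> 0 \<Longrightarrow>
      (w i has_real_derivative c * ((if i = k then 1 else 0) - exp (w i t) / (\<Sum>z<M. exp (w z t))))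
        (at t within {0..})"
begin

lemma exp_neg_diff_constant:
  assumes "i < M" "j < M" "i \<noteq> k" "j \<noteq> k" "s \<ge> 0" "t \<ge> 0"
  shows "exp (- w i t) - exp (- w j t) = exp (- w i s) - exp (- w j s)"
proof -
  have "\<exists>C. \<forall>t\<in>{0..}. exp (- w i t) - exp (- w j t) = C"
  proof (rule has_field_derivative_zero_constant)
    fix t :: real assume "t \<in> {0..}"
    then have "((\<lambda>t. exp (- w i t) - exp (- w j t)) has_real_derivative
       exp (- w i t) * (c * (exp (w i t) / (\<Sum>z<M. exp (w z t))))
       - exp (- w j t) * (c * (exp (w j t) / (\<Sum>z<M. exp (w z t))))) (at t within {0..})"
      using assms has_derivative_w[of i t] has_derivative_w[of j t]
      by (auto intro!: derivative_eq_intros)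
    then show "((\<lambda>t. exp (- w i t) - exp (- w j t)) has_real_derivative 0) (at t within {0..})"
      by (simp add: exp_minus field_simps)
  qed simp
  then show ?thesis using assms by force
qed

lemma sum_constant:
  assumes "k < M" "s \<ge> 0" "t \<ge> 0"
  shows "(\<Sum>i<M. w i t) = (\<Sum>i<M. w i s)"
proof -
  have "\<exists>C. \<forall>t\<in>{0..}. (\<Sum>i<M. w i t) = C"
  proof (rule has_field_derivative_zero_constant)
    fix t :: real assume t: "t \<in> {0..}"
    have Z: "(\<Sum>z<M. exp (w z t)) > 0" using assms by (intro sum_pos) auto
    have "(\<Sum>i<M. exp (w i t) / (\<Sum>z<M. exp (w z t))) = 1"
      using Z by (simp add: sum_divide_distrib[symmetric])
    then have "(\<Sum>i<M. c * ((if i = k then 1 else 0) - exp (w i t) / (\<Sum>z<M. exp (w z t)))) = 0"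
      using assms by (simp add: sum_distrib_left[symmetric] sum_subtractf)
    moreover have "((\<lambda>t. \<Sum>i<M. w i t) has_real_derivative
        (\<Sum>i<M. c * ((if i = k then 1 else 0) - exp (w i t) / (\<Sum>z<M. exp (w z t)))))
        (at t within {0..})"
      using t by (intro DERIV_sum has_derivative_w) auto
    ultimately show "((\<lambda>t. \<Sum>i<M. w i t) has_real_derivative 0) (at t within {0..})"
      by simp
  qed simp
  then show ?thesis using assms by force
qed

end

theorem mainTheorem4:
  fixes N M :: nat
    and e u :: "nat \<Rightarrow> real^'d"
    and fstar :: "nat \<Rightarrow> nat"
    and p :: "nat \<Rightarrow> real"
    and W :: "real \<Rightarrow> real^'d^'d"
    and x :: nat
  assumes "N \<ge> 2" and "M \<ge> 2"
    and "CARD('d) \<ge> max N M"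
    and "\<forall>y<N. fstar y < M"
    and "\<forall>y<N. p y \<ge> 0" and "(\<Sum>y<N. p y) = 1"
    and "\<forall>a<N. \<forall>b<N. e a \<bullet> e b = (if a = b then 1 else 0)"
    and "\<forall>a<M. \<forall>b<M. u a \<bullet> u b = (if a = b then 1 else 0)"
    and "\<forall>t\<ge>0. \<exists>G. GDERIV (loss N M e u fstar p) (W t) :> G
                  \<and> (W has_vector_derivative - G) (at t within {0..})"
    and "x < N"
  shows "(\<forall>i<M. \<forall>j<M. i \<noteq> fstar x \<longrightarrow> j \<noteq> fstar x \<longrightarrow>
            (\<forall>s\<ge>0. \<forall>t\<ge>0.
               exp (- (u i \<bullet> (W t *v e x))) - exp (- (u j \<bullet> (W t *v e x)))
             = exp (- (u i \<bullet> (W s *v e x))) - exp (- (u j \<bullet> (W s *v e x)))))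
       \<and> (\<forall>s\<ge>0. \<forall>t\<ge>0. (\<Sum>i<M. u i \<bullet> (W t *v e x)) = (\<Sum>i<M. u i \<bullet> (W s *v e x)))"
proof -
  interpret softmax_logit_flow "\<lambda>i t. logit e u (W t) i x" M "fstar x" "p x"
  proof
    fix i and t :: real assume "i < M" "t \<ge> 0"
    with assms(9) obtain G where "GDERIV (loss N M e u fstar p) (W t) :> G"
      and "(W has_vector_derivative - G) (at t within {0..})" by blast
    from logit_has_derivative_along_gradient_flow[OF this assms(7,8,4,10) \<open>i < M\<close>]
    show "((\<lambda>t. logit e u (W t) i x) has_real_derivative p x * ((if i = fstar x then 1 else 0)
        - exp (logit e u (W t) i x) / (\<Sum>z<M. exp (logit e u (W t) z x)))) (at t within {0..})"
      by (simp add: pW_def)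
  qed
  have "fstar x < M" using assms(4,10) by blast
  then show ?thesis
    unfolding logit_def[symmetric] using exp_neg_diff_constant sum_constant by blast
qed

end
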